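(* Let $T_1,T_2$ be tables joined on column $J$ with frequencies $a_v,b_v$ ($v\in\mathcal U$). Fix UBS parameters $(p_1,q_1)$ with $0<p_1,q_1\le1$ for $T_1$, and fix an effective sampling rate $\epsilon_2\in(0,1]$ for $T_2$ with $\epsilon_2\le p_1$. Over all UBS parameters $(p_2,q_2)$ for $T_2$ with $p_2\in[\epsilon_2,1]$ and $q_2=\epsilon_2/p_2$, the variance of $\hat J_{\mathrm{count}}=\frac{1}{\min\{p_1,p_2\}q_1q_2}|S_1\bowtie_J S_2|$ (where $S_1=\mathrm{UBS}_{p_1,q_1}(T_1,J)$, $S_2=\mathrm{UBS}_{p_2,q_2}(T_2,J)$) is minimized when $p_2=p_1$ and $q_2=\epsilon_2/p_1$.
   Context: $T_1,T_2$ are finite multisets of tuples with a join attribute $J$ taking values in a finite set $\mathcal U$; $a_v$ (resp. $b_v$) is the number of tuples of $T_1$ (resp. $T_2$) with $J$-value $v$. $S_1\bowtie_J S_2$ is the set of pairs $(t_1,t_2)\in S_1\times S_2$ with $t_1.J=t_2.J$. $\mathrm{UBS}_{p,q}(T,J)$: given a hash function $h:\mathcal U\to[0,1]$, each tuple $t\in T$ with $h(t.J)<p$ is included independently with probability $q$; others are excluded. The values $h(v)$ are independent uniform on $[0,1]$, the same $h$ is used for both tables, and the Bernoulli coins are independent across all tuples and independent of $h$. The effective sampling rate of $\mathrm{UBS}_{p,q}$ is $pq$. *)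

theory Defs
  imports "HOL-Probability.Probability"
begin

text \<open>Tuples of T1 with join value v are indexed by (v,i), i < a v; likewise for T2 with b.\<close>
definition tuple_ids :: "'u set \<Rightarrow> ('u \<Rightarrow> nat) \<Rightarrow> ('u \<times> nat) set" where
  "tuple_ids U c = {(v, i). v \<in> U \<and> i < c v}"

text \<open>Joint probability space of the UBS experiment: independent uniform hash values h v on [0,1]
  (shared by both tables), independent Bernoulli(q1) coins for the tuples of T1 and
  independent Bernoulli(q2) coins for the tuples of T2, all mutually independent.\<close>
definition ubs_space ::
  "'u set \<Rightarrow> ('u \<Rightarrow> nat) \<Rightarrow> ('u \<Rightarrow> nat) \<Rightarrow> real \<Rightarrow> real \<Rightarrow>
   (('u \<Rightarrow> real) \<times> (('u \<times> nat) \<Rightarrow> bool) \<times> (('u \<times> nat) \<Rightarrow> bool)) measure" where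
  "ubs_space U a b q1 q2 =
     (PiM U (\<lambda>_. uniform_measure lborel {0..1::real})) \<Otimes>\<^sub>M
     ((PiM (tuple_ids U a) (\<lambda>_. measure_pmf (bernoulli_pmf q1))) \<Otimes>\<^sub>M
      (PiM (tuple_ids U b) (\<lambda>_. measure_pmf (bernoulli_pmf q2))))"

definition join_size ::
  "'u set \<Rightarrow> ('u \<Rightarrow> nat) \<Rightarrow> ('u \<Rightarrow> nat) \<Rightarrow> real \<Rightarrow> real \<Rightarrow>
   (('u \<Rightarrow> real) \<times> (('u \<times> nat) \<Rightarrow> bool) \<times> (('u \<times> nat) \<Rightarrow> bool)) \<Rightarrow> nat" where
  "join_size U a b p1 p2 \<omega> =
     (case \<omega> of (h, c1, c2) \<Rightarrow>
       card {(t1, t2). t1 \<in> tuple_ids U a \<and> t2 \<in> tuple_ids U b \<and> fst t1 = fst t2 \<and>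
                       h (fst t1) < p1 \<and> c1 t1 \<and> h (fst t2) < p2 \<and> c2 t2})"

definition J_count ::
  "'u set \<Rightarrow> ('u \<Rightarrow> nat) \<Rightarrow> ('u \<Rightarrow> nat) \<Rightarrow> real \<Rightarrow> real \<Rightarrow> real \<Rightarrow> real \<Rightarrow>
   (('u \<Rightarrow> real) \<times> (('u \<times> nat) \<Rightarrow> bool) \<times> (('u \<times> nat) \<Rightarrow> bool)) \<Rightarrow> real" where
  "J_count U a b p1 q1 p2 q2 \<omega> = real (join_size U a b p1 p2 \<omega>) / (min p1 p2 * q1 * q2)"

definition J_count_variance ::
  "'u set \<Rightarrow> ('u \<Rightarrow> nat) \<Rightarrow> ('u \<Rightarrow> nat) \<Rightarrow> real \<Rightarrow> real \<Rightarrow> real \<Rightarrow> real \<Rightarrow> real" where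
  "J_count_variance U a b p1 q1 p2 q2 =
     prob_space.variance (ubs_space U a b q1 q2) (J_count U a b p1 q1 p2 q2)"

end

theory Submission
  imports Defs
begin

text \<open>A joinable pair \<open>(t1, t2)\<close> with common join value \<open>v\<close> lies in \<open>S1 \<bowtie> S2\<close> iff
  \<open>h v < min p1 p2\<close> and both coins are heads, an event of probability \<open>D = min p1 p2 * q1 * q2\<close>.
  Hence the estimator is the number of surviving pairs divided by \<open>D\<close>, it is unbiased, and its
  variance is \<open>\<Sum>x y. P(x and y survive) / D\<^sup>2 - N\<^sup>2\<close>, where \<open>P(x and y survive) = m\<^sup>k q1\<^sup>j q2\<^sup>l\<close> with
  \<open>k, j, l\<close> the numbers of distinct join values, \<open>T1\<close>-tuples and \<open>T2\<close>-tuples occurring in \<open>x, y\<close>.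
  With \<open>q2 = \<epsilon>2 / p2\<close> the \<open>q1\<close>-factor does not depend on \<open>p2\<close>, and since a shared \<open>T2\<close>-tuple
  forces a shared join value only \<open>(k, l) \<in> {(2,2), (1,2), (1,1)}\<close> occur, with normalized terms
  \<open>1\<close>, \<open>1 / m\<close> and \<open>p2 / (m \<epsilon>2)\<close>. As \<open>m = min p1 p2 \<le> p1\<close> and \<open>p2 / m \<ge> 1\<close>, every term is minimal
  at \<open>p2 = p1\<close>.\<close>

lemma measure_pair_measure_Times:
  assumes "prob_space M1" "prob_space M2" "A \<in> sets M1" "B \<in> sets M2"
  shows "measure (M1 \<Otimes>\<^sub>M M2) (A \<times> B) = measure M1 A * measure M2 B"
proof -
  interpret pair_prob_space M1 M2
    using assms(1,2) by (simp add: pair_prob_space_def pair_sigma_finite_def prob_space_imp_sigma_finite)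
  show ?thesis
    using assms(3,4) by (simp add: measure_def M2.emeasure_pair_measure_Times enn2real_mult)
qed

lemma measure_PiM_cylinder:
  assumes "prob_space N" "space N = UNIV" "finite I" "S \<subseteq> I" "A \<in> sets N"
  shows "measure (PiM I (\<lambda>_. N)) (PiE I (\<lambda>i. if i \<in> S then A else UNIV)) = measure N A ^ card S"
proof -
  interpret product_prob_space "\<lambda>_. N"
    using assms(1) by (rule product_prob_spaceI)
  interpret finite_product_prob_space "\<lambda>_. N" I
    by unfold_locales (rule assms(3))
  have "measure (PiM I (\<lambda>_. N)) (PiE I (\<lambda>i. if i \<in> S then A else UNIV))
      = (\<Prod>i\<in>I. measure N (if i \<in> S then A else UNIV))"
    using assms(5) sets.top[of N] by (intro prob_times) (auto simp: assms(2))
  also have "\<dots> = measure N A ^ card S"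
    using assms by (simp add: if_distrib prod.If_cases Int_absorb1 Int_absorb2 M.prob_space flip: assms(2))
  finally show ?thesis .
qed

lemma measure_uniform_unit_lessThan:
  assumes "0 \<le> m" "m \<le> 1"
  shows "measure (uniform_measure lborel {0..1::real}) {..<m} = m"
proof -
  have "{0..1} \<inter> {..<m} = {0..<m}"
    using assms by auto
  then show ?thesis
    using assms by simp
qed

lemma prob_space_uniform_unit: "prob_space (uniform_measure lborel {0..1::real})"
  by (rule prob_space_uniform_measure) auto

lemma (in prob_space) expectation_of_bool:
  assumes "{\<omega> \<in> space M. P \<omega>} \<in> events"
  shows "integrable M (\<lambda>\<omega>. of_bool (P \<omega>) :: real)" "expectation (\<lambda>\<omega>. of_bool (P \<omega>)) = prob {\<omega> \<in> space M. P \<omega>}"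
proof -
  have eq: "\<And>\<omega>. \<omega> \<in> space M \<Longrightarrow> (of_bool (P \<omega>) :: real) = indicator {\<omega> \<in> space M. P \<omega>} \<omega>"
    by (simp add: indicator_def)
  show "integrable M (\<lambda>\<omega>. of_bool (P \<omega>) :: real)"
    using assms by (subst Bochner_Integration.integrable_cong[OF refl eq]) (auto simp: emeasure_eq_measure)
  show "expectation (\<lambda>\<omega>. of_bool (P \<omega>)) = prob {\<omega> \<in> space M. P \<omega>}"
    using assms by (subst Bochner_Integration.integral_cong[OF refl eq]) auto
qed

lemma (in prob_space) variance_normalized_count:
  fixes P :: "'i \<Rightarrow> 'a \<Rightarrow> bool" and D :: real
  assumes I: "finite I"
    and sets: "\<And>i j. i \<in> I \<Longrightarrow> j \<in> I \<Longrightarrow> {\<omega> \<in> space M. P i \<omega> \<and> P j \<omega>} \<in> events"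
    and prob: "\<And>i. i \<in> I \<Longrightarrow> prob {\<omega> \<in> space M. P i \<omega>} = D" and "D \<noteq> 0"
  shows "variance (\<lambda>\<omega>. (\<Sum>i\<in>I. of_bool (P i \<omega>)) / D)
           = (\<Sum>i\<in>I. \<Sum>j\<in>I. prob {\<omega> \<in> space M. P i \<omega> \<and> P j \<omega>}) / D\<^sup>2 - (card I)\<^sup>2"
proof -
  define X where "X \<omega> = (\<Sum>i\<in>I. of_bool (P i \<omega>)) / D" for \<omega>
  have X2: "(X \<omega>)\<^sup>2 = (\<Sum>i\<in>I. \<Sum>j\<in>I. of_bool (P i \<omega> \<and> P j \<omega>)) / D\<^sup>2" for \<omega>
    by (simp add: X_def power2_eq_square sum_product of_bool_conj)
  have single: "{\<omega> \<in> space M. P i \<omega>} \<in> events" if "i \<in> I" for i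
    using sets[OF that that] by simp
  have "expectation X = (\<Sum>i\<in>I. expectation (\<lambda>\<omega>. of_bool (P i \<omega>))) / D"
    unfolding X_def using single
    by (simp add: Bochner_Integration.integral_sum expectation_of_bool(1))
  also have "\<dots> = (\<Sum>i\<in>I. prob {\<omega> \<in> space M. P i \<omega>}) / D"
    using single by (simp add: expectation_of_bool(2))
  also have "\<dots> = card I"
    using prob \<open>D \<noteq> 0\<close> by simp
  finally have EX: "expectation X = card I" .
  have EX2: "expectation (\<lambda>\<omega>. (X \<omega>)\<^sup>2) = (\<Sum>i\<in>I. \<Sum>j\<in>I. prob {\<omega> \<in> space M. P i \<omega> \<and> P j \<omega>}) / D\<^sup>2"
    unfolding X2 using sets
    by (simp add: Bochner_Integration.integral_sum expectation_of_bool)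
  have "integrable M X"
    unfolding X_def by (intro integrable_divide Bochner_Integration.integrable_sum expectation_of_bool(1) single)
  moreover have "integrable M (\<lambda>\<omega>. (X \<omega>)\<^sup>2)"
    unfolding X2 by (intro integrable_divide Bochner_Integration.integrable_sum expectation_of_bool(1) sets)
  ultimately have "variance X = expectation (\<lambda>\<omega>. (X \<omega>)\<^sup>2) - (expectation X)\<^sup>2"
    by (rule variance_eq)
  also have "\<dots> = (\<Sum>i\<in>I. \<Sum>j\<in>I. prob {\<omega> \<in> space M. P i \<omega> \<and> P j \<omega>}) / D\<^sup>2 - (card I)\<^sup>2"
    using EX EX2 by simp
  finally show ?thesis
    by (simp only: X_def[abs_def])
qed

lemma space_ubs_space:
  "space (ubs_space U a b q1 q2) =
     (U \<rightarrow>\<^sub>E UNIV) \<times> (tuple_ids U a \<rightarrow>\<^sub>E UNIV) \<times> (tuple_ids U b \<rightarrow>\<^sub>E UNIV)"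
  by (simp add: ubs_space_def space_pair_measure space_PiM)

lemma prob_space_ubs_space: "prob_space (ubs_space U a b q1 q2)"
  unfolding ubs_space_def
  by (intro prob_space_pair prob_space_PiM prob_space_uniform_unit prob_space_measure_pmf)

lemma finite_tuple_ids: "finite U \<Longrightarrow> finite (tuple_ids U c)"
  by (rule finite_subset[of _ "Sigma U (\<lambda>v. {..<c v})"]) (auto simp: tuple_ids_def)

lemma ubs_space_box:
  fixes U :: "'u set"
  assumes U: "finite U" and "HV \<subseteq> U" "S1 \<subseteq> tuple_ids U a" "S2 \<subseteq> tuple_ids U b"
    and m: "0 \<le> m" "m \<le> 1" and q: "0 \<le> q1" "q1 \<le> 1" "0 \<le> q2" "q2 \<le> 1"
  defines "E \<equiv> {\<omega> \<in> space (ubs_space U a b q1 q2). (\<forall>v\<in>HV. fst \<omega> v < m) \<and> (\<forall>t\<in>S1. fst (snd \<omega>) t) \<and> (\<forall>t\<in>S2. snd (snd \<omega>) t)}"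
  shows "E \<in> sets (ubs_space U a b q1 q2)"
    and "measure (ubs_space U a b q1 q2) E = m ^ card HV * q1 ^ card S1 * q2 ^ card S2"
proof -
  let ?M = "ubs_space U a b q1 q2"
  let ?H = "PiM U (\<lambda>_. uniform_measure lborel {0..1::real})"
  let ?C1 = "PiM (tuple_ids U a) (\<lambda>_. measure_pmf (bernoulli_pmf q1))"
  let ?C2 = "PiM (tuple_ids U b) (\<lambda>_. measure_pmf (bernoulli_pmf q2))"
  let ?A = "PiE U (\<lambda>v. if v \<in> HV then {..<m} else UNIV)"
  let ?B1 = "PiE (tuple_ids U a) (\<lambda>t. if t \<in> S1 then {True} else UNIV)"
  let ?B2 = "PiE (tuple_ids U b) (\<lambda>t. if t \<in> S2 then {True} else UNIV)"
  have fin: "finite (tuple_ids U a)" "finite (tuple_ids U b)"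
    using U by (simp_all add: finite_tuple_ids)
  have prob: "prob_space ?H" "prob_space ?C1" "prob_space ?C2"
    by (simp_all add: prob_space_uniform_unit prob_space_PiM prob_space_measure_pmf)
  have E: "E = ?A \<times> ?B1 \<times> ?B2"
    using assms(2-4) by (auto simp: E_def space_ubs_space PiE_iff split: if_splits)
  have sets: "?A \<in> sets ?H" "?B1 \<in> sets ?C1" "?B2 \<in> sets ?C2"
    using U fin by (auto intro!: sets_PiM_I_finite)
  then show "E \<in> sets ?M"
    by (simp add: E ubs_space_def)
  have "measure ?M E = measure ?H ?A * (measure ?C1 ?B1 * measure ?C2 ?B2)"
    using prob sets unfolding E ubs_space_def
    by (simp add: measure_pair_measure_Times prob_space_pair)
  also have "\<dots> = m ^ card HV * q1 ^ card S1 * q2 ^ card S2"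
  proof -
    have "measure ?H ?A = m ^ card HV"
      using measure_PiM_cylinder[OF prob_space_uniform_unit _ U \<open>HV \<subseteq> U\<close>, where A = "{..<m}"]
      unfolding measure_uniform_unit_lessThan[OF m] by simp
    moreover have "measure ?C1 ?B1 = q1 ^ card S1"
      using measure_PiM_cylinder[OF prob_space_measure_pmf _ fin(1) \<open>S1 \<subseteq> _\<close>, where A = "{True}"]
        q by (simp add: measure_pmf_single)
    moreover have "measure ?C2 ?B2 = q2 ^ card S2"
      using measure_PiM_cylinder[OF prob_space_measure_pmf _ fin(2) \<open>S2 \<subseteq> _\<close>, where A = "{True}"]
        q by (simp add: measure_pmf_single)
    ultimately show ?thesis
      by simp
  qed
  finally show "measure ?M E = m ^ card HV * q1 ^ card S1 * q2 ^ card S2" .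
qed

definition join_pairs :: "'u set \<Rightarrow> ('u \<Rightarrow> nat) \<Rightarrow> ('u \<Rightarrow> nat) \<Rightarrow> (('u \<times> nat) \<times> ('u \<times> nat)) set" where
  "join_pairs U a b = {(t1, t2). t1 \<in> tuple_ids U a \<and> t2 \<in> tuple_ids U b \<and> fst t1 = fst t2}"

definition pair_sampled ::
  "real \<Rightarrow> ('u \<times> nat) \<times> ('u \<times> nat) \<Rightarrow> ('u \<Rightarrow> real) \<times> (('u \<times> nat) \<Rightarrow> bool) \<times> (('u \<times> nat) \<Rightarrow> bool) \<Rightarrow> bool"
  where "pair_sampled m x \<omega> \<longleftrightarrow> fst \<omega> (fst (fst x)) < m \<and> fst (snd \<omega>) (fst x) \<and> snd (snd \<omega>) (snd x)"

lemma finite_join_pairs: "finite U \<Longrightarrow> finite (join_pairs U a b)"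
  by (rule finite_subset[of _ "tuple_ids U a \<times> tuple_ids U b"]) (auto simp: join_pairs_def finite_tuple_ids)

lemma J_count_eq_normalized_count:
  fixes U :: "'u set"
  assumes "finite U"
  shows "J_count U a b p1 q1 p2 q2 =
    (\<lambda>\<omega>. (\<Sum>x\<in>join_pairs U a b. of_bool (pair_sampled (min p1 p2) x \<omega>)) / (min p1 p2 * q1 * q2))"
proof
  fix \<omega> :: "('u \<Rightarrow> real) \<times> (('u \<times> nat) \<Rightarrow> bool) \<times> (('u \<times> nat) \<Rightarrow> bool)"
  obtain h c1 c2 where \<omega>: "\<omega> = (h, c1, c2)"
    by (cases \<omega>) auto
  have "join_size U a b p1 p2 \<omega> = card (join_pairs U a b \<inter> {x. pair_sampled (min p1 p2) x \<omega>})"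
    unfolding join_size_def \<omega> prod.case
    by (rule arg_cong[where f = card]) (auto simp: join_pairs_def pair_sampled_def)
  then show "J_count U a b p1 q1 p2 q2 \<omega> =
      (\<Sum>x\<in>join_pairs U a b. of_bool (pair_sampled (min p1 p2) x \<omega>)) / (min p1 p2 * q1 * q2)"
    using assms by (simp add: J_count_def finite_join_pairs)
qed

definition joint_sampling_prob ::
  "real \<Rightarrow> real \<Rightarrow> real \<Rightarrow> ('u \<times> nat) \<times> ('u \<times> nat) \<Rightarrow> ('u \<times> nat) \<times> ('u \<times> nat) \<Rightarrow> real" where
  "joint_sampling_prob m q1 q2 x y =
     m ^ card {fst (fst x), fst (fst y)} * q1 ^ card {fst x, fst y} * q2 ^ card {snd x, snd y}"

lemma prob_pair_sampled_both:
  fixes U :: "'u set"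
  assumes "finite U" "x \<in> join_pairs U a b" "y \<in> join_pairs U a b"
    and "0 \<le> m" "m \<le> 1" "0 \<le> q1" "q1 \<le> 1" "0 \<le> q2" "q2 \<le> 1"
  defines "E \<equiv> {\<omega> \<in> space (ubs_space U a b q1 q2). pair_sampled m x \<omega> \<and> pair_sampled m y \<omega>}"
  shows "E \<in> sets (ubs_space U a b q1 q2)"
    and "measure (ubs_space U a b q1 q2) E = joint_sampling_prob m q1 q2 x y"
proof -
  have "{fst (fst x), fst (fst y)} \<subseteq> U" "{fst x, fst y} \<subseteq> tuple_ids U a" "{snd x, snd y} \<subseteq> tuple_ids U b"
    using assms(2,3) by (auto simp: join_pairs_def tuple_ids_def)
  note box = ubs_space_box[OF assms(1) this assms(4-9)]
  have "E = {\<omega> \<in> space (ubs_space U a b q1 q2). (\<forall>v\<in>{fst (fst x), fst (fst y)}. fst \<omega> v < m) \<and>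
              (\<forall>t\<in>{fst x, fst y}. fst (snd \<omega>) t) \<and> (\<forall>t\<in>{snd x, snd y}. snd (snd \<omega>) t)}"
    by (auto simp: E_def pair_sampled_def)
  then show "E \<in> sets (ubs_space U a b q1 q2)"
    and "measure (ubs_space U a b q1 q2) E = joint_sampling_prob m q1 q2 x y"
    unfolding joint_sampling_prob_def using box by simp_all
qed

lemma J_count_variance_eq:
  fixes U :: "'u set"
  assumes "finite U" "0 < min p1 p2" "min p1 p2 \<le> 1" "0 < q1" "q1 \<le> 1" "0 < q2" "q2 \<le> 1"
  shows "J_count_variance U a b p1 q1 p2 q2 =
    (\<Sum>x\<in>join_pairs U a b. \<Sum>y\<in>join_pairs U a b. joint_sampling_prob (min p1 p2) q1 q2 x y)
      / (min p1 p2 * q1 * q2)\<^sup>2 - (card (join_pairs U a b))\<^sup>2"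
proof -
  let ?M = "ubs_space U a b q1 q2" and ?m = "min p1 p2"
  interpret prob_space ?M
    by (rule prob_space_ubs_space)
  have both: "{\<omega> \<in> space ?M. pair_sampled ?m x \<omega> \<and> pair_sampled ?m y \<omega>} \<in> events"
    "prob {\<omega> \<in> space ?M. pair_sampled ?m x \<omega> \<and> pair_sampled ?m y \<omega>} = joint_sampling_prob ?m q1 q2 x y"
    if "x \<in> join_pairs U a b" "y \<in> join_pairs U a b" for x y
    using prob_pair_sampled_both[OF assms(1) that] assms(2-7) by simp_all
  have single: "prob {\<omega> \<in> space ?M. pair_sampled ?m x \<omega>} = ?m * q1 * q2" if "x \<in> join_pairs U a b" for x
    using both(2)[OF that that] by (simp add: joint_sampling_prob_def)
  have "variance (\<lambda>\<omega>. (\<Sum>x\<in>join_pairs U a b. of_bool (pair_sampled ?m x \<omega>)) / (?m * q1 * q2)) =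
    (\<Sum>x\<in>join_pairs U a b. \<Sum>y\<in>join_pairs U a b. joint_sampling_prob ?m q1 q2 x y)
      / (?m * q1 * q2)\<^sup>2 - (card (join_pairs U a b))\<^sup>2"
    using assms both single by (subst variance_normalized_count) (auto simp: finite_join_pairs)
  then show ?thesis
    unfolding J_count_variance_def J_count_eq_normalized_count[OF assms(1)] .
qed

lemma card_doubleton_cases: "card {x, y} \<in> {1, 2}"
  by (cases "x = y") auto

lemma normalized_power_le:
  fixes e m p1 p2 :: real
  assumes "0 < e" "0 < m" "m \<le> p1" "m \<le> p2" "k \<in> {1, 2}" "l \<in> {1, 2}" "l = 1 \<Longrightarrow> k = 1"
  shows "p1 ^ k * (e / p1) ^ l / (p1 * (e / p1))\<^sup>2 \<le> m ^ k * (e / p2) ^ l / (m * (e / p2))\<^sup>2"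
proof -
  consider "k = 2" "l = 2" | "k = 1" "l = 2" | "k = 1" "l = 1"
    using assms(5-7) by auto
  then show ?thesis
    by cases (use assms(1-4) in \<open>simp_all add: power2_eq_square field_simps\<close>)
qed

lemma normalized_joint_sampling_prob_le:
  assumes "x \<in> join_pairs U a b" "y \<in> join_pairs U a b"
    and "0 < e" "e \<le> p1" "e \<le> p2" "0 < q1"
  shows "joint_sampling_prob p1 q1 (e / p1) x y / (p1 * q1 * (e / p1))\<^sup>2
       \<le> joint_sampling_prob (min p1 p2) q1 (e / p2) x y / (min p1 p2 * q1 * (e / p2))\<^sup>2"
proof -
  have factor: "joint_sampling_prob m q1 r x y / (m * q1 * r)\<^sup>2 =
      q1 ^ card {fst x, fst y} / q1\<^sup>2 *
      (m ^ card {fst (fst x), fst (fst y)} * r ^ card {snd x, snd y} / (m * r)\<^sup>2)" for m r :: real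
    by (simp add: joint_sampling_prob_def power_mult_distrib ac_simps)
  have "card {snd x, snd y} = 1 \<Longrightarrow> card {fst (fst x), fst (fst y)} = 1"
    using assms(1,2) by (cases "snd x = snd y") (auto simp: join_pairs_def)
  then have "p1 ^ card {fst (fst x), fst (fst y)} * (e / p1) ^ card {snd x, snd y} / (p1 * (e / p1))\<^sup>2
      \<le> min p1 p2 ^ card {fst (fst x), fst (fst y)} * (e / p2) ^ card {snd x, snd y} / (min p1 p2 * (e / p2))\<^sup>2"
    using assms(3-5) card_doubleton_cases[of "fst (fst x)" "fst (fst y)"] card_doubleton_cases[of "snd x" "snd y"]
    by (intro normalized_power_le) auto
  then show ?thesis
    unfolding factor using assms(6) by (intro mult_left_mono) auto
qed

theorem lemma2:
  fixes U :: "'u set" and a b :: "'u \<Rightarrow> nat" and p1 q1 \<epsilon>2 :: real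
  assumes "finite U"
    and "0 < p1" "p1 \<le> 1" "0 < q1" "q1 \<le> 1"
    and "0 < \<epsilon>2" "\<epsilon>2 \<le> 1" "\<epsilon>2 \<le> p1"
  shows "\<forall>p2 \<in> {\<epsilon>2..1}.
           J_count_variance U a b p1 q1 p1 (\<epsilon>2 / p1) \<le> J_count_variance U a b p1 q1 p2 (\<epsilon>2 / p2)"
proof
  fix p2 assume p2: "p2 \<in> {\<epsilon>2..1}"
  let ?P = "join_pairs U a b"
  have "J_count_variance U a b p1 q1 p1 (\<epsilon>2 / p1) =
      (\<Sum>x\<in>?P. \<Sum>y\<in>?P. joint_sampling_prob p1 q1 (\<epsilon>2 / p1) x y / (p1 * q1 * (\<epsilon>2 / p1))\<^sup>2) - (card ?P)\<^sup>2"
    using J_count_variance_eq[of U p1 p1 q1 "\<epsilon>2 / p1"] assms by (simp add: sum_divide_distrib)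
  also have "\<dots> \<le> (\<Sum>x\<in>?P. \<Sum>y\<in>?P. joint_sampling_prob (min p1 p2) q1 (\<epsilon>2 / p2) x y
                     / (min p1 p2 * q1 * (\<epsilon>2 / p2))\<^sup>2) - (card ?P)\<^sup>2"
    using assms p2 by (intro diff_right_mono sum_mono normalized_joint_sampling_prob_le) auto
  also have "\<dots> = J_count_variance U a b p1 q1 p2 (\<epsilon>2 / p2)"
    using J_count_variance_eq[of U p1 p2 q1 "\<epsilon>2 / p2"] assms p2 by (simp add: sum_divide_distrib)
  finally show "J_count_variance U a b p1 q1 p1 (\<epsilon>2 / p1) \<le> J_count_variance U a b p1 q1 p2 (\<epsilon>2 / p2)" .
qed

end
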